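(* Fix $u\in W^{1,\gamma}(\Omega)$. Then, for nonnegative $m\in L^{\beta+1}(\Omega)$ and $h\in L^{\gamma'}(\Gamma_D)$, \[ \frac{\langle A_u(m,h)-A_u(0,0),\,(m,h)\rangle}{\|m\|_{L^{\beta+1}(\Omega)}+\|h\|_{L^{\gamma'}(\Gamma_D)}}\longrightarrow\infty\quad\text{as }\|m\|_{L^{\beta+1}(\Omega)}+\|h\|_{L^{\gamma'}(\Gamma_D)}\to\infty. \]
   Context: Setting. $\Omega\subset\mathbb{R}^d$ is open, bounded, connected, with $C^1$ boundary $\Gamma=\partial\Omega$; $ds$ denotes the surface measure $d\mathcal{H}^{d-1}$. $\Gamma=\overline{\Gamma_D\cup\Gamma_N}$, where $\Gamma_D,\Gamma_N$ are disjoint, nonempty, relatively open $C^1$ $(d-1)$-dimensional manifolds of positive $\mathcal{H}^{d-1}$-measure with $\mathcal{H}^{d-1}(\partial\Gamma_D\cap\partial\Gamma_N)=0$. Boundary values of Sobolev functions are traces. Exponents: $\alpha>1$, $\beta>0$, $\gamma=\frac{\beta+1}{\beta}\alpha$, $\gamma'=\gamma/(\gamma-1)$. Data: $j\in L^{\gamma'}(\Gamma_N)$, $j\ge0$, $j\not\equiv0$. $g:[0,\infty)\to\mathbb{R}$ is continuous and strictly increasing, and there is $C>1$ with $C^{-1}m^\beta-C\le g(m)\le Cm^\beta+C$ for all $m\ge0$. $H:\overline\Omega\times\mathbb{R}^d\to\mathbb{R}$ is measurable in $x$, and for a.e. $x$, $H(x,\cdot)\in C^1(\mathbb{R}^d)$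 is convex; there is $C>1$ such that for a.e. $x\in\Omega$ and all $p\in\mathbb{R}^d$: $|D_pH(x,p)|\le C|p|^{\alpha-1}+C$, $H(x,0)\le C$, and one of the following holds: (a) $H(x,p)\ge C^{-1}|p|^\alpha-C$; (b) $D_pH(x,p)\cdot p\ge C^{-1}|p|^\alpha-C$ and $H(x,p)\ge -C$; (c) $-H(x,p)+D_pH(x,p)\cdot p\ge C^{-1}|p|^\alpha-C$ and $H(x,p)\ge-C$. Auxiliary operator. For fixed $u\in W^{1,\gamma}(\Omega)$, $A_u:L^{\beta+1}(\Omega)\times L^{\gamma'}(\Gamma_D)\to L^{\frac{\beta+1}{\beta}}(\Omega)\times L^\gamma(\Gamma_D)$ is defined (for nonnegative $(m,h)$) by \[\langle A_u(m,h),(\mu,k)\rangle=\int_\Omega(-H(x,Du)+g(m))\mu\,dx+\int_{\Gamma_D}(-u+h^{\gamma'-1})k\,ds.\] *)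

theory Defs
  imports "HOL-Analysis.Analysis"
begin

definition in_Lp :: "'a measure \<Rightarrow> real \<Rightarrow> ('a \<Rightarrow> real) \<Rightarrow> bool" where
  "in_Lp M p f \<longleftrightarrow> f \<in> borel_measurable M \<and> integrable M (\<lambda>x. \<bar>f x\<bar> powr p)"

definition Lp_norm :: "'a measure \<Rightarrow> real \<Rightarrow> ('a \<Rightarrow> real) \<Rightarrow> real" where
  "Lp_norm M p f = (\<integral>x. \<bar>f x\<bar> powr p \<partial>M) powr (1 / p)"

definition test_fun :: "'a::euclidean_space set \<Rightarrow> ('a \<Rightarrow> real) \<Rightarrow> ('a \<Rightarrow> 'a \<Rightarrow> real) \<Rightarrow> bool" where
  "test_fun \<Omega> \<phi> \<phi>' \<longleftrightarrow>
     (\<forall>x. (\<phi> has_derivative \<phi>' x) (at x)) \<and>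
     (\<forall>i\<in>Basis. continuous_on UNIV (\<lambda>x. \<phi>' x i)) \<and>
     compact (closure {x. \<phi> x \<noteq> 0}) \<and> closure {x. \<phi> x \<noteq> 0} \<subseteq> \<Omega>"

definition W1p :: "'a::euclidean_space set \<Rightarrow> real \<Rightarrow> ('a \<Rightarrow> real) \<Rightarrow> ('a \<Rightarrow> 'a) \<Rightarrow> bool" where
  "W1p \<Omega> p u Du \<longleftrightarrow>
     in_Lp (lebesgue_on \<Omega>) p u \<and>
     Du \<in> borel_measurable (lebesgue_on \<Omega>) \<and>
     (\<forall>i\<in>Basis. in_Lp (lebesgue_on \<Omega>) p (\<lambda>x. Du x \<bullet> i)) \<and>
     (\<forall>\<phi> \<phi>'. test_fun \<Omega> \<phi> \<phi>' \<longrightarrow>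
        (\<forall>i\<in>Basis. (\<integral>x. u x * \<phi>' x i \<partial>lebesgue_on \<Omega>)
                   = - (\<integral>x. (Du x \<bullet> i) * \<phi> x \<partial>lebesgue_on \<Omega>)))"

text \<open>The pairing  < A_u(m,h), (mu,k) >.  Here Du is the weak gradient of u,
  tu its trace on Gamma_D, sD the surface measure restricted to Gamma_D,
  gp = gamma'.\<close>
definition A_pair ::
  "'a::euclidean_space set \<Rightarrow> 'a measure \<Rightarrow> real \<Rightarrow> ('a \<Rightarrow> 'a \<Rightarrow> real) \<Rightarrow> (real \<Rightarrow> real)
   \<Rightarrow> ('a \<Rightarrow> 'a) \<Rightarrow> ('a \<Rightarrow> real)
   \<Rightarrow> ('a \<Rightarrow> real) \<Rightarrow> ('a \<Rightarrow> real) \<Rightarrow> ('a \<Rightarrow> real) \<Rightarrow> ('a \<Rightarrow> real) \<Rightarrow> real" where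
  "A_pair \<Omega> sD gp H g Du tu m h \<mu> k =
     (\<integral>x. (- H x (Du x) + g (m x)) * \<mu> x \<partial>lebesgue_on \<Omega>)
   + (\<integral>s. (- tu s + h s powr (gp - 1)) * k s \<partial>sD)"

end

theory Submission
  imports Defs
begin

text \<open>In \<open>\<langle>A_u(m,h) - A_u(0,0), (m,h)\<rangle>\<close> the terms containing \<open>H(x,Du)\<close> and the trace of \<open>u\<close>
  cancel, leaving \<open>\<integral>(g(m) - g(0)) m + \<parallel>h\<parallel>^\<gamma>'\<close>. The cancellation is legitimate because these
  terms are integrable: convexity and the bound on \<open>D_pH\<close> give \<open>|H(x,p)| \<le> 2C(1 + |p|^\<alpha>)\<close>,
  and Young's inequality with exponents \<open>(\<beta>+1)/\<beta>\<close> and \<open>\<beta>+1\<close> puts \<open>|Du|^\<alpha> m\<close> into \<open>L^1\<close>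
  since \<open>\<alpha>(\<beta>+1)/\<beta> = \<gamma>\<close>. The lower growth of \<open>g\<close> bounds the first integral below by
  \<open>\<parallel>m\<parallel>^(\<beta>+1)/(2C) - const\<close>, and since \<open>\<beta> + 1 > 1\<close> and \<open>\<gamma>' > 1\<close> these powers of the
  norms eventually dominate every multiple of \<open>\<parallel>m\<parallel> + \<parallel>h\<parallel>\<close>.\<close>

lemma le_one_plus_powr:
  fixes t p :: real
  assumes "t \<ge> 0" "p \<ge> 1"
  shows "t \<le> 1 + t powr p"
proof (cases "t \<le> 1")
  case False
  then have "t powr 1 \<le> t powr p" using assms by (intro powr_mono) auto
  then show ?thesis using False by simp
next
  case True
  moreover have "0 \<le> t powr p" by simp
  ultimately show ?thesis by linarith
qed

lemma powr_sum_le_card_powr_mult_sum: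
  fixes a :: "'i \<Rightarrow> real"
  assumes "finite I" "I \<noteq> {}" "\<And>i. i \<in> I \<Longrightarrow> a i \<ge> 0" "q > 0"
  shows "(\<Sum>i\<in>I. a i) powr q \<le> real (card I) powr q * (\<Sum>i\<in>I. a i powr q)"
proof -
  have "Max (a ` I) \<in> a ` I" using assms(1,2) by simp
  then obtain j where j: "j \<in> I" "a j = Max (a ` I)" by auto
  then have "(\<Sum>i\<in>I. a i) \<le> real (card I) * a j"
    using sum_bounded_above[of I a "a j"] assms(1) by simp
  then have "(\<Sum>i\<in>I. a i) powr q \<le> (real (card I) * a j) powr q"
    using assms by (intro powr_mono2) (auto intro: sum_nonneg)
  also have "\<dots> = real (card I) powr q * a j powr q"
    using assms j by (simp add: powr_mult)
  also have "\<dots> \<le> real (card I) powr q * (\<Sum>i\<in>I. a i powr q)"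
    using assms j by (intro mult_left_mono member_le_sum) auto
  finally show ?thesis .
qed

lemma linear_le_powr_plus_const:
  fixes A b p :: real
  assumes "b > 0" "p > 1"
  shows "\<exists>c. \<forall>t\<ge>0. A * t \<le> b * t powr p + c"
proof -
  define T where "T = (\<bar>A\<bar> / b) powr (1 / (p - 1))"
  have "A * t \<le> b * t powr p + \<bar>A\<bar> * T" if t: "t \<ge> 0" for t
  proof -
    have "A * t \<le> \<bar>A\<bar> * t" using t by (intro mult_right_mono) auto
    moreover have "\<bar>A\<bar> * t \<le> b * t powr p + \<bar>A\<bar> * T"
    proof (cases "t \<le> T")
      case True
      then have "\<bar>A\<bar> * t \<le> \<bar>A\<bar> * T" by (intro mult_left_mono) auto
      moreover have "0 \<le> b * t powr p" using assms by simp
      ultimately show ?thesis by linarith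
    next
      case False
      have "\<bar>A\<bar> / b = T powr (p - 1)"
        unfolding T_def using assms by (simp add: powr_powr)
      also have "\<dots> \<le> t powr (p - 1)"
        using False assms by (intro powr_mono2) (auto simp: T_def)
      finally have "\<bar>A\<bar> * t \<le> b * t powr (p - 1) * t"
        using assms t by (intro mult_right_mono) (auto simp: field_simps)
      also have "\<dots> = b * t powr p"
        using powr_mult_base[OF t, of "p - 1"] by (simp add: mult_ac)
      finally have "\<bar>A\<bar> * t \<le> b * t powr p" .
      moreover have "0 \<le> \<bar>A\<bar> * T" unfolding T_def by simp
      ultimately show ?thesis by linarith
    qed
    ultimately show ?thesis by linarith
  qed
  then show ?thesis by blast
qed

lemma linear_le_sum_powr_eventually:
  fixes a b p q K c :: real
  assumes "a > 0" "b > 0" "p > 1" "q > 1"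
  shows "\<exists>R>0. \<forall>x y. 0 \<le> x \<longrightarrow> 0 \<le> y \<longrightarrow> R \<le> x + y \<longrightarrow>
           K * (x + y) \<le> a * x powr p + b * y powr q - c"
proof -
  obtain c1 where c1: "\<And>t. t \<ge> 0 \<Longrightarrow> (K + 1) * t \<le> a * t powr p + c1"
    using linear_le_powr_plus_const[OF assms(1,3)] by blast
  obtain c2 where c2: "\<And>t. t \<ge> 0 \<Longrightarrow> (K + 1) * t \<le> b * t powr q + c2"
    using linear_le_powr_plus_const[OF assms(2,4)] by blast
  show ?thesis
  proof (intro exI[of _ "max 1 (c + c1 + c2)"] conjI allI impI)
    fix x y :: real
    assume "0 \<le> x" "0 \<le> y" "max 1 (c + c1 + c2) \<le> x + y"
    moreover have "K * (x + y) = (K + 1) * x + (K + 1) * y - (x + y)"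
      by (simp add: algebra_simps)
    ultimately show "K * (x + y) \<le> a * x powr p + b * y powr q - c"
      using c1[of x] c2[of y] by linarith
  qed simp
qed

lemma coercive_of_lower_growth:
  fixes g :: "real \<Rightarrow> real" and C \<beta> :: real
  assumes "C > 0" "\<beta> > 0" and lower: "\<And>t. t \<ge> 0 \<Longrightarrow> t powr \<beta> / C - C \<le> g t"
  shows "\<exists>c. \<forall>t\<ge>0. t powr (\<beta> + 1) / (2 * C) - c \<le> (g t - g 0) * t"
proof -
  obtain c where c: "\<And>t. t \<ge> 0 \<Longrightarrow> (C + \<bar>g 0\<bar>) * t \<le> t powr (\<beta> + 1) / (2 * C) + c"
    using linear_le_powr_plus_const[of "1 / (2 * C)" "\<beta> + 1" "C + \<bar>g 0\<bar>"] assms(1,2) by auto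
  have "t powr (\<beta> + 1) / (2 * C) - c \<le> (g t - g 0) * t" if t: "t \<ge> 0" for t
  proof -
    have "t powr (\<beta> + 1) / C - (C + \<bar>g 0\<bar>) * t = (t powr \<beta> / C - C - \<bar>g 0\<bar>) * t"
      using powr_mult_base[OF t, of \<beta>] by (simp add: algebra_simps)
    also have "\<dots> \<le> (g t - g 0) * t"
      using lower[OF t] t by (intro mult_right_mono) auto
    moreover have "t powr (\<beta> + 1) / C = 2 * (t powr (\<beta> + 1) / (2 * C))"
      by simp
    moreover have "0 \<le> t powr (\<beta> + 1) / (2 * C)"
      using assms(1) by simp
    ultimately show ?thesis
      using c[OF t] by linarith
  qed
  then show ?thesis by blast
qed

lemma convex_on_ge_tangent:
  fixes f :: "'a::real_normed_vector \<Rightarrow> real"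
  assumes convex: "convex_on UNIV f" and deriv: "(f has_derivative f') (at x)"
  shows "f x + f' (y - x) \<le> f y"
proof -
  define \<phi> where "\<phi> t = f (x + t *\<^sub>R (y - x))" for t :: real
  have "convex_on UNIV \<phi>"
  proof (rule convex_onI)
    fix t s r :: real assume "0 < t" "t < 1"
    have "\<phi> ((1 - t) *\<^sub>R s + t *\<^sub>R r)
        = f ((1 - t) *\<^sub>R (x + s *\<^sub>R (y - x)) + t *\<^sub>R (x + r *\<^sub>R (y - x)))"
      unfolding \<phi>_def by (simp add: algebra_simps)
    also have "\<dots> \<le> (1 - t) * \<phi> s + t * \<phi> r"
      unfolding \<phi>_def using convex_onD[OF convex] \<open>0 < t\<close> \<open>t < 1\<close> by simp
    finally show "\<phi> ((1 - t) *\<^sub>R s + t *\<^sub>R r) \<le> (1 - t) * \<phi> s + t * \<phi> r" .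
  qed simp
  moreover have "(\<phi> has_field_derivative f' (y - x)) (at 0)"
  proof -
    have "((\<lambda>t. x + t *\<^sub>R (y - x)) has_derivative (\<lambda>t. t *\<^sub>R (y - x))) (at 0)"
      by (auto intro!: derivative_eq_intros)
    from has_derivative_compose[OF this, of f f'] deriv
    have "(\<phi> has_derivative (\<lambda>t. f' (t *\<^sub>R (y - x)))) (at 0)"
      unfolding \<phi>_def by (simp add: o_def)
    moreover have "(\<lambda>t. f' (t *\<^sub>R (y - x))) = (*) (f' (y - x))"
      using linear_scale[OF has_derivative_linear[OF deriv]] by (auto simp: fun_eq_iff)
    ultimately show ?thesis by (simp add: has_field_derivative_def)
  qed
  ultimately have "\<phi> 1 - \<phi> 0 \<ge> f' (y - x) * (1 - 0)"
    by (intro convex_on_imp_above_tangent) auto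
  then show ?thesis unfolding \<phi>_def by simp
qed

lemma abs_le_of_convex_gradient_growth:
  fixes f :: "'a::real_inner \<Rightarrow> real"
  assumes "convex_on UNIV f" "(f has_derivative (\<lambda>v. D \<bullet> v)) (at p)"
    and "norm D \<le> C * norm p powr (\<alpha> - 1) + C" "f 0 \<le> C" "- C \<le> f p" "C \<ge> 0" "\<alpha> \<ge> 1"
  shows "\<bar>f p\<bar> \<le> 2 * C * (1 + norm p powr \<alpha>)"
proof -
  have "f p \<le> f 0 + D \<bullet> p"
    using convex_on_ge_tangent[OF assms(1,2), of 0] by simp
  also have "\<dots> \<le> C + (C * norm p powr (\<alpha> - 1) + C) * norm p"
    using assms(3,4) norm_cauchy_schwarz[of D p] mult_right_mono[OF assms(3) norm_ge_zero[of p]]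
    by linarith
  also have "\<dots> = C * (1 + norm p powr \<alpha> + norm p)"
    using powr_mult_base[OF norm_ge_zero, of p "\<alpha> - 1"] by (simp add: algebra_simps)
  also have "\<dots> \<le> 2 * C * (1 + norm p powr \<alpha>)"
    using mult_left_mono[OF le_one_plus_powr[OF norm_ge_zero assms(7)] assms(6), of p]
    by (simp add: algebra_simps)
  finally have upper: "f p \<le> 2 * C * (1 + norm p powr \<alpha>)" .
  have "2 * C * (1 + norm p powr \<alpha>) = 2 * C + 2 * (C * norm p powr \<alpha>)"
    by (simp add: algebra_simps)
  moreover have "0 \<le> C * norm p powr \<alpha>"
    using assms(6) by simp
  ultimately show ?thesis
    using upper assms(5,6) unfolding abs_le_iff by linarith
qed

text \<open>The limits of \<open>H x (F i x)\<close> along simple approximations \<open>F i\<close> of \<open>f\<close> agree with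
  \<open>H x (f x)\<close> only almost everywhere; completeness of Lebesgue measure makes that enough.\<close>
lemma borel_measurable_Caratheodory:
  fixes H :: "'a::euclidean_space \<Rightarrow> 'b::euclidean_space \<Rightarrow> real"
  assumes H: "\<And>p. (\<lambda>x. H x p) \<in> borel_measurable (lebesgue_on S)"
    and S: "S \<in> sets lebesgue"
    and f: "f \<in> borel_measurable (lebesgue_on S)"
    and cont: "AE x in lebesgue_on S. continuous_on UNIV (H x)"
  shows "(\<lambda>x. H x (f x)) \<in> borel_measurable (lebesgue_on S)"
proof -
  let ?M = "lebesgue_on S"
  obtain F where F: "\<And>i. simple_function ?M (F i)"
    "\<And>x. x \<in> space ?M \<Longrightarrow> (\<lambda>i. F i x) \<longlonglongrightarrow> f x"
    using borel_measurable_implies_sequence_metric[OF f, of 0] by blast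
  have approx_meas: "(\<lambda>x. H x (F i x)) \<in> borel_measurable ?M" for i
  proof (rule measurable_compose_countable'[where I = "F i ` space ?M" and f = "\<lambda>p x. H x p"])
    have fin: "finite (F i ` space ?M)"
      using F(1)[of i] unfolding simple_function_def by blast
    then show "countable (F i ` space ?M)"
      by (rule countable_finite)
    show "F i \<in> ?M \<rightarrow>\<^sub>M count_space (F i ` space ?M)"
      using fin F(1)[of i] unfolding measurable_count_space_eq2[OF fin] simple_function_def by blast
  qed (rule H)
  define L where "L x = lim (\<lambda>i. H x (F i x))" for x
  have "L \<in> borel_measurable ?M"
    unfolding L_def using approx_meas by (rule borel_measurable_lim_metric)
  moreover have "AE x in ?M. L x = H x (f x)"
    using cont AE_space
  proof eventually_elim
    case (elim x)
    have "(\<lambda>i. H x (F i x)) \<longlonglongrightarrow> H x (f x)"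
      using continuous_on_tendsto_compose[OF elim(1) F(2)[OF elim(2)]] by simp
    then show ?case
      unfolding L_def by (rule limI)
  qed
  moreover have S': "S \<inter> space lebesgue \<in> sets lebesgue"
    using S by simp
  ultimately have "(\<lambda>x. indicator S x * L x) \<in> borel_measurable lebesgue"
    and "AE x in lebesgue. indicator S x * L x = indicator S x * H x (f x)"
    using borel_measurable_restrict_space_iff[OF S', of L]
    unfolding AE_restrict_space_iff[OF S'] by (auto elim!: eventually_mono simp: indicator_def)
  then have "(\<lambda>x. indicator S x * H x (f x)) \<in> borel_measurable lebesgue"
    by (rule borel_measurable_AE)
  then show ?thesis
    using borel_measurable_restrict_space_iff[OF S', of "\<lambda>x. H x (f x)"] by simp
qed

lemma borel_measurable_compose_continuous_on_nonneg:
  fixes g :: "real \<Rightarrow> real"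
  assumes g: "continuous_on {0..} g" and m: "m \<in> borel_measurable M"
    and nn: "\<And>x. x \<in> space M \<Longrightarrow> m x \<ge> 0"
  shows "(\<lambda>x. g (m x)) \<in> borel_measurable M"
proof -
  have "continuous_on UNIV (\<lambda>y. g (max 0 y))"
    by (rule continuous_on_compose2[OF g]) (auto intro!: continuous_intros)
  then have "(\<lambda>y. g (max 0 y)) \<in> borel_measurable borel" by (rule borel_measurable_continuous_onI)
  from measurable_compose[OF m this] have "(\<lambda>x. g (max 0 (m x))) \<in> borel_measurable M" .
  then show ?thesis by (rule measurable_cong[THEN iffD1, rotated]) (simp add: nn max_def)
qed

lemma integrable_mult_of_conjugate_powr:
  fixes f g :: "'a \<Rightarrow> real"
  assumes "p > 1" "q > 1" "1 / p + 1 / q = 1"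
    and [measurable]: "f \<in> borel_measurable M" "g \<in> borel_measurable M"
    and "integrable M (\<lambda>x. \<bar>f x\<bar> powr p)" "integrable M (\<lambda>x. \<bar>g x\<bar> powr q)"
  shows "integrable M (\<lambda>x. f x * g x)"
proof (rule Bochner_Integration.integrable_bound)
  show "integrable M (\<lambda>x. \<bar>f x\<bar> powr p + \<bar>g x\<bar> powr q)"
    using assms by simp
  show "AE x in M. norm (f x * g x) \<le> norm (\<bar>f x\<bar> powr p + \<bar>g x\<bar> powr q)"
  proof (rule AE_I2)
    fix x
    have "\<bar>f x\<bar> * \<bar>g x\<bar> \<le> \<bar>f x\<bar> powr p / p + \<bar>g x\<bar> powr q / q"
      using Youngs_inequality[OF assms(1-3)] by simp
    also have "\<dots> \<le> \<bar>f x\<bar> powr p / 1 + \<bar>g x\<bar> powr q / 1"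
      using assms(1,2) by (intro add_mono divide_left_mono) auto
    finally show "norm (f x * g x) \<le> norm (\<bar>f x\<bar> powr p + \<bar>g x\<bar> powr q)"
      by (simp add: abs_mult)
  qed
qed measurable

lemma integrable_of_integrable_powr:
  fixes f :: "'a \<Rightarrow> real"
  assumes "finite_measure M" "p \<ge> 1"
    and "f \<in> borel_measurable M" "integrable M (\<lambda>x. \<bar>f x\<bar> powr p)"
  shows "integrable M f"
proof (rule Bochner_Integration.integrable_bound)
  show "integrable M (\<lambda>x. 1 + \<bar>f x\<bar> powr p)"
    using assms(1,4) by (simp add: finite_measure.integrable_const)
  show "AE x in M. norm (f x) \<le> norm (1 + \<bar>f x\<bar> powr p)"
    using le_one_plus_powr[OF abs_ge_zero assms(2)] by (intro AE_I2) simp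
qed (rule assms(3))

lemma integrable_mult_of_growth_bound:
  fixes F w m :: "'a \<Rightarrow> real"
  assumes M: "finite_measure M" and exps: "\<beta> > 0" "\<gamma> = (\<beta> + 1) / \<beta> * \<alpha>"
    and [measurable]: "F \<in> borel_measurable M" "w \<in> borel_measurable M" "m \<in> borel_measurable M"
    and F: "AE x in M. \<bar>F x\<bar> \<le> B * (1 + w x powr \<alpha>)"
    and w: "integrable M (\<lambda>x. w x powr \<gamma>)"
    and m: "integrable M (\<lambda>x. \<bar>m x\<bar> powr (\<beta> + 1))" "\<And>x. x \<in> space M \<Longrightarrow> 0 \<le> m x"
  shows "integrable M (\<lambda>x. F x * m x)"
proof (rule Bochner_Integration.integrable_bound)
  have "integrable M m"
    using exps(1) by (intro integrable_of_integrable_powr[OF M _ _ m(1)]) auto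
  moreover have "integrable M (\<lambda>x. w x powr \<alpha> * m x)"
  proof (rule integrable_mult_of_conjugate_powr)
    have "\<bar>w x powr \<alpha>\<bar> powr ((\<beta> + 1) / \<beta>) = w x powr \<gamma>" for x
      unfolding exps(2) by (simp add: powr_powr ac_simps)
    then show "integrable M (\<lambda>x. \<bar>w x powr \<alpha>\<bar> powr ((\<beta> + 1) / \<beta>))"
      using w by simp
    show "1 / ((\<beta> + 1) / \<beta>) + 1 / (\<beta> + 1) = 1"
      using exps(1) by (simp add: field_simps)
  qed (use exps(1) m(1) in auto)
  ultimately show "integrable M (\<lambda>x. B * (m x + w x powr \<alpha> * m x))"
    by simp
  show "AE x in M. norm (F x * m x) \<le> norm (B * (m x + w x powr \<alpha> * m x))"
    using F AE_space
  proof eventually_elim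
    case (elim x)
    then have "\<bar>F x * m x\<bar> \<le> B * (1 + w x powr \<alpha>) * m x"
      using m(2) by (simp add: abs_mult mult_right_mono)
    also have "\<dots> = B * (m x + w x powr \<alpha> * m x)"
      by (simp add: algebra_simps)
    finally show ?case by simp
  qed
qed measurable

lemma integrable_compose_mult_of_growth_bound:
  fixes g :: "real \<Rightarrow> real" and m :: "'a \<Rightarrow> real"
  assumes M: "finite_measure M" and "\<beta> \<ge> 0"
    and g: "continuous_on {0..} g" "\<And>t. t \<ge> 0 \<Longrightarrow> \<bar>g t\<bar> \<le> C * t powr \<beta> + C"
    and [measurable]: "m \<in> borel_measurable M"
    and m: "integrable M (\<lambda>x. \<bar>m x\<bar> powr (\<beta> + 1))" "\<And>x. x \<in> space M \<Longrightarrow> 0 \<le> m x"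
  shows "integrable M (\<lambda>x. g (m x) * m x)"
proof (rule Bochner_Integration.integrable_bound)
  have "integrable M m"
    using assms(2) by (intro integrable_of_integrable_powr[OF M _ _ m(1)]) auto
  then show "integrable M (\<lambda>x. C * \<bar>m x\<bar> powr (\<beta> + 1) + C * m x)"
    using m(1) by simp
  show "(\<lambda>x. g (m x) * m x) \<in> borel_measurable M"
    using borel_measurable_compose_continuous_on_nonneg[OF g(1) _ m(2)] by measurable
  show "AE x in M. norm (g (m x) * m x) \<le> norm (C * \<bar>m x\<bar> powr (\<beta> + 1) + C * m x)"
  proof (rule AE_I2)
    fix x assume "x \<in> space M"
    then have mx: "0 \<le> m x" using m(2) by simp
    then have "\<bar>g (m x) * m x\<bar> \<le> (C * m x powr \<beta> + C) * m x"
      using g(2)[OF mx] by (simp add: abs_mult mult_right_mono)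
    also have "\<dots> = C * \<bar>m x\<bar> powr (\<beta> + 1) + C * m x"
      using powr_mult_base[OF mx, of \<beta>] mx by (simp add: algebra_simps)
    finally show "norm (g (m x) * m x) \<le> norm (C * \<bar>m x\<bar> powr (\<beta> + 1) + C * m x)"
      by simp
  qed
qed

lemma W1p_integrable_norm_gradient_powr:
  assumes "W1p \<Omega> p u Du" "p > 0"
  shows "integrable (lebesgue_on \<Omega>) (\<lambda>x. norm (Du x) powr p)"
proof (rule Bochner_Integration.integrable_bound)
  let ?bound = "\<lambda>x. real DIM('a) powr p * (\<Sum>i\<in>Basis. \<bar>Du x \<bullet> i\<bar> powr p)"
  have [measurable]: "Du \<in> borel_measurable (lebesgue_on \<Omega>)"
    and "\<And>i. i \<in> Basis \<Longrightarrow> integrable (lebesgue_on \<Omega>) (\<lambda>x. \<bar>Du x \<bullet> i\<bar> powr p)"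
    using assms(1) unfolding W1p_def in_Lp_def by auto
  then show "integrable (lebesgue_on \<Omega>) ?bound"
    by (intro integrable_mult_right integrable_sum) auto
  show "(\<lambda>x. norm (Du x) powr p) \<in> borel_measurable (lebesgue_on \<Omega>)"
    by measurable
  show "AE x in lebesgue_on \<Omega>. norm (norm (Du x) powr p) \<le> norm (?bound x)"
  proof (rule AE_I2)
    fix x
    have "norm (Du x) powr p \<le> (\<Sum>i\<in>Basis. \<bar>Du x \<bullet> i\<bar>) powr p"
      using assms(2) by (intro powr_mono2 norm_le_l1) auto
    also have "\<dots> \<le> ?bound x"
      using assms(2) by (intro powr_sum_le_card_powr_mult_sum) auto
    finally show "norm (norm (Du x) powr p) \<le> norm (?bound x)"
      by (simp add: sum_nonneg)
  qed
qed

lemma Lp_norm_powr: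
  assumes "p > 0"
  shows "Lp_norm M p f powr p = (\<integral>x. \<bar>f x\<bar> powr p \<partial>M)"
  unfolding Lp_norm_def using assms by (simp add: powr_powr)

lemma Lp_norm_nonneg: "Lp_norm M p f \<ge> 0"
  unfolding Lp_norm_def by simp

lemma A_pair_diff_eq:
  assumes "integrable (lebesgue_on \<Omega>) (\<lambda>x. H x (Du x) * m x)"
    and "integrable (lebesgue_on \<Omega>) (\<lambda>x. g (m x) * m x)" "integrable (lebesgue_on \<Omega>) m"
    and "integrable N (\<lambda>s. tu s * h s)" "integrable N (\<lambda>s. \<bar>h s\<bar> powr q)"
    and "\<And>s. s \<in> space N \<Longrightarrow> 0 \<le> h s"
  shows "A_pair \<Omega> N q H g Du tu m h m h - A_pair \<Omega> N q H g Du tu (\<lambda>_. 0) (\<lambda>_. 0) m h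
       = (\<integral>x. (g (m x) - g 0) * m x \<partial>lebesgue_on \<Omega>) + (\<integral>s. \<bar>h s\<bar> powr q \<partial>N)"
proof -
  let ?M = "lebesgue_on \<Omega>"
  have "(\<integral>x. (- H x (Du x) + g (m x)) * m x \<partial>?M) - (\<integral>x. (- H x (Du x) + g 0) * m x \<partial>?M)
      = (\<integral>x. (- H x (Du x) + g (m x)) * m x - (- H x (Du x) + g 0) * m x \<partial>?M)"
    using assms(1-3) by (intro Bochner_Integration.integral_diff[symmetric]) (auto simp: algebra_simps)
  also have "\<dots> = (\<integral>x. (g (m x) - g 0) * m x \<partial>?M)"
    by (simp add: algebra_simps)
  finally have bulk_terms:
    "(\<integral>x. (- H x (Du x) + g (m x)) * m x \<partial>?M) - (\<integral>x. (- H x (Du x) + g 0) * m x \<partial>?M)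
      = (\<integral>x. (g (m x) - g 0) * m x \<partial>?M)" .
  have "h s powr (q - 1) * h s = \<bar>h s\<bar> powr q" if "s \<in> space N" for s
    using powr_mult_base[OF assms(6)[OF that], of "q - 1"] assms(6)[OF that] by (simp add: mult.commute)
  then have "(\<integral>s. (- tu s + h s powr (q - 1)) * h s \<partial>N) - (\<integral>s. (- tu s + 0 powr (q - 1)) * h s \<partial>N)
      = (\<integral>s. \<bar>h s\<bar> powr q - tu s * h s \<partial>N) + (\<integral>s. tu s * h s \<partial>N)"
    by (simp add: algebra_simps cong: Bochner_Integration.integral_cong)
  also have "\<dots> = (\<integral>s. \<bar>h s\<bar> powr q \<partial>N)"
    using assms(4,5) by simp
  finally show ?thesis
    unfolding A_pair_def using bulk_terms by simp
qed

lemma A_pair_diff_lower_bound: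
  fixes \<Omega> :: "'a::euclidean_space set"
  assumes \<Omega>: "\<Omega> \<in> lmeasurable"
    and exps: "\<beta> > 0" "\<gamma> = (\<beta> + 1) / \<beta> * \<alpha>" "\<gamma> > 1" "q > 1" "1 / \<gamma> + 1 / q = 1"
    and g: "continuous_on {0..} g" "\<And>t. t \<ge> 0 \<Longrightarrow> \<bar>g t\<bar> \<le> C * t powr \<beta> + C"
      "\<And>t. t \<ge> 0 \<Longrightarrow> a * t powr (\<beta> + 1) - c \<le> (g t - g 0) * t"
    and Hu: "(\<lambda>x. H x (Du x)) \<in> borel_measurable (lebesgue_on \<Omega>)"
      "AE x in lebesgue_on \<Omega>. \<bar>H x (Du x)\<bar> \<le> B * (1 + norm (Du x) powr \<alpha>)"
    and Du: "Du \<in> borel_measurable (lebesgue_on \<Omega>)"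
      "integrable (lebesgue_on \<Omega>) (\<lambda>x. norm (Du x) powr \<gamma>)"
    and tu: "in_Lp N \<gamma> tu"
    and m: "in_Lp (lebesgue_on \<Omega>) (\<beta> + 1) m" "\<And>x. x \<in> \<Omega> \<Longrightarrow> 0 \<le> m x"
    and h: "in_Lp N q h" "\<And>s. s \<in> space N \<Longrightarrow> 0 \<le> h s"
  shows "a * Lp_norm (lebesgue_on \<Omega>) (\<beta> + 1) m powr (\<beta> + 1) + Lp_norm N q h powr q
           - c * measure lebesgue \<Omega>
         \<le> A_pair \<Omega> N q H g Du tu m h m h - A_pair \<Omega> N q H g Du tu (\<lambda>_. 0) (\<lambda>_. 0) m h"
proof -
  let ?M = "lebesgue_on \<Omega>"
  have M: "finite_measure ?M"
    using \<Omega> by (rule finite_measure_lebesgue_on)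
  have [measurable]: "m \<in> borel_measurable ?M"
    and m_powr: "integrable ?M (\<lambda>x. \<bar>m x\<bar> powr (\<beta> + 1))"
    and h_powr: "integrable N (\<lambda>s. \<bar>h s\<bar> powr q)"
    using m(1) h(1) unfolding in_Lp_def by auto
  have m_int: "integrable ?M m"
    using exps(1) by (intro integrable_of_integrable_powr[OF M _ _ m_powr]) auto
  have Hu_m: "integrable ?M (\<lambda>x. H x (Du x) * m x)"
    by (rule integrable_mult_of_growth_bound[OF M exps(1,2) Hu(1) _ _ Hu(2) Du(2) m_powr])
      (use Du(1) m(2) in auto)
  have gm_int: "integrable ?M (\<lambda>x. g (m x) * m x)"
    by (rule integrable_compose_mult_of_growth_bound[OF M _ g(1,2) _ m_powr]) (use exps(1) m(2) in auto)
  have tu_h: "integrable N (\<lambda>s. tu s * h s)"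
    using tu h(1) exps(3-5) by (intro integrable_mult_of_conjugate_powr[of \<gamma> q]) (auto simp: in_Lp_def)
  have "(\<integral>x. a * \<bar>m x\<bar> powr (\<beta> + 1) - c \<partial>?M) \<le> (\<integral>x. (g (m x) - g 0) * m x \<partial>?M)"
  proof (rule integral_mono)
    show "integrable ?M (\<lambda>x. (g (m x) - g 0) * m x)"
      using gm_int m_int by (simp add: left_diff_distrib)
    show "a * \<bar>m x\<bar> powr (\<beta> + 1) - c \<le> (g (m x) - g 0) * m x" if "x \<in> space ?M" for x
      using g(3)[of "m x"] m(2)[of x] that by simp
  qed (use m_powr M in \<open>simp add: finite_measure.integrable_const\<close>)
  moreover have "(\<integral>x. a * \<bar>m x\<bar> powr (\<beta> + 1) - c \<partial>?M)
      = a * Lp_norm ?M (\<beta> + 1) m powr (\<beta> + 1) - c * measure lebesgue \<Omega>"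
    using m_powr \<Omega> exps(1) M by (simp add: Lp_norm_powr measure_restrict_space finite_measure.integrable_const)
  ultimately show ?thesis
    using A_pair_diff_eq[of \<Omega> H Du m g N tu h q] Hu_m gm_int m_int tu_h h_powr h(2)
      Lp_norm_powr[of q N h] exps(4)
    by simp
qed

lemma A_pair_diff_superlinear:
  fixes \<Omega> :: "'a::euclidean_space set"
  assumes \<Omega>: "\<Omega> \<in> lmeasurable"
    and exps: "\<beta> > 0" "\<gamma> = (\<beta> + 1) / \<beta> * \<alpha>" "\<gamma> > 1" "q > 1" "1 / \<gamma> + 1 / q = 1"
    and g: "continuous_on {0..} g" "C > 0"
      "\<And>t. t \<ge> 0 \<Longrightarrow> t powr \<beta> / C - C \<le> g t \<and> g t \<le> C * t powr \<beta> + C"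
    and Hu: "(\<lambda>x. H x (Du x)) \<in> borel_measurable (lebesgue_on \<Omega>)"
      "AE x in lebesgue_on \<Omega>. \<bar>H x (Du x)\<bar> \<le> B * (1 + norm (Du x) powr \<alpha>)"
    and Du: "Du \<in> borel_measurable (lebesgue_on \<Omega>)"
      "integrable (lebesgue_on \<Omega>) (\<lambda>x. norm (Du x) powr \<gamma>)"
    and tu: "in_Lp N \<gamma> tu"
  shows "\<exists>R. \<forall>m h.
           in_Lp (lebesgue_on \<Omega>) (\<beta> + 1) m \<and> (\<forall>x\<in>\<Omega>. 0 \<le> m x) \<and>
           in_Lp N q h \<and> (\<forall>s\<in>space N. 0 \<le> h s) \<and>
           R \<le> Lp_norm (lebesgue_on \<Omega>) (\<beta> + 1) m + Lp_norm N q h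
         \<longrightarrow> K \<le> (A_pair \<Omega> N q H g Du tu m h m h - A_pair \<Omega> N q H g Du tu (\<lambda>_. 0) (\<lambda>_. 0) m h)
                 / (Lp_norm (lebesgue_on \<Omega>) (\<beta> + 1) m + Lp_norm N q h)"
proof -
  let ?M = "lebesgue_on \<Omega>"
  have g_abs: "\<bar>g t\<bar> \<le> C * t powr \<beta> + C" if "t \<ge> 0" for t
  proof -
    have "0 \<le> t powr \<beta> / C" "0 \<le> C * t powr \<beta>"
      using g(2) by simp_all
    then show ?thesis
      using g(3)[OF that] unfolding abs_le_iff by linarith
  qed
  obtain c where g_coercive: "\<And>t. t \<ge> 0 \<Longrightarrow> 1 / (2 * C) * t powr (\<beta> + 1) - c \<le> (g t - g 0) * t"
    using coercive_of_lower_growth[of C \<beta> g] g(2,3) exps(1) by auto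
  obtain R where "R > 0" and R: "\<And>x y. 0 \<le> x \<Longrightarrow> 0 \<le> y \<Longrightarrow> R \<le> x + y \<Longrightarrow>
      K * (x + y) \<le> 1 / (2 * C) * x powr (\<beta> + 1) + 1 * y powr q - c * measure lebesgue \<Omega>"
    using linear_le_sum_powr_eventually[of "1 / (2 * C)" 1 "\<beta> + 1" q K "c * measure lebesgue \<Omega>"]
      g(2) exps(1,4)
    by auto
  have "K * (Lp_norm ?M (\<beta> + 1) m + Lp_norm N q h)
      \<le> A_pair \<Omega> N q H g Du tu m h m h - A_pair \<Omega> N q H g Du tu (\<lambda>_. 0) (\<lambda>_. 0) m h"
    if "in_Lp ?M (\<beta> + 1) m" "\<forall>x\<in>\<Omega>. 0 \<le> m x" "in_Lp N q h" "\<forall>s\<in>space N. 0 \<le> h s"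
      "R \<le> Lp_norm ?M (\<beta> + 1) m + Lp_norm N q h" for m h
    using R[OF Lp_norm_nonneg Lp_norm_nonneg that(5)]
      A_pair_diff_lower_bound[where H = H and Du = Du, OF \<Omega> exps g(1) g_abs g_coercive Hu Du tu
        that(1) that(2)[rule_format] that(3) that(4)[rule_format]]
    by simp
  then show ?thesis
    using \<open>R > 0\<close> by (intro exI[of _ R]) (auto simp: pos_le_divide_eq)
qed

theorem proposition4p6:
  fixes \<Omega> \<Gamma>D \<Gamma>N :: "'a::euclidean_space set"
    and \<sigma> :: "'a measure"
    and \<alpha> \<beta> \<gamma> \<gamma>' C\<^sub>g C\<^sub>H :: real
    and g :: "real \<Rightarrow> real"
    and H :: "'a \<Rightarrow> 'a \<Rightarrow> real" and DH :: "'a \<Rightarrow> 'a \<Rightarrow> 'a"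
    and u :: "'a \<Rightarrow> real" and Du :: "'a \<Rightarrow> 'a" and tu :: "'a \<Rightarrow> real"
  assumes \<Omega>: "open \<Omega>" "bounded \<Omega>" "connected \<Omega>" "\<Omega> \<noteq> {}"
    and \<Gamma>: "\<Gamma>D \<subseteq> frontier \<Omega>" "\<Gamma>N \<subseteq> frontier \<Omega>" "\<Gamma>D \<inter> \<Gamma>N = {}"
       "frontier \<Omega> = closure (\<Gamma>D \<union> \<Gamma>N)"
       "openin (top_of_set (frontier \<Omega>)) \<Gamma>D" "openin (top_of_set (frontier \<Omega>)) \<Gamma>N"
    and \<sigma>: "sets \<sigma> = sets lborel" "emeasure \<sigma> (frontier \<Omega>) < \<infinity>"
       "emeasure \<sigma> \<Gamma>D > 0" "emeasure \<sigma> \<Gamma>N > 0"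
    and exps: "\<alpha> > 1" "\<beta> > 0" "\<gamma> = (\<beta> + 1) / \<beta> * \<alpha>" "\<gamma>' = \<gamma> / (\<gamma> - 1)"
    and g_cont: "continuous_on {0..} g" and g_mono: "strict_mono_on {0..} g"
    and g_growth: "C\<^sub>g > 1" "\<And>m. m \<ge> 0 \<Longrightarrow> m powr \<beta> / C\<^sub>g - C\<^sub>g \<le> g m \<and> g m \<le> C\<^sub>g * m powr \<beta> + C\<^sub>g"
    and H_meas: "\<And>p. (\<lambda>x. H x p) \<in> borel_measurable (lebesgue_on (closure \<Omega>))"
    and H_C1: "AE x in lebesgue_on \<Omega>.
          (\<forall>p. (H x has_derivative (\<lambda>v. DH x p \<bullet> v)) (at p)) \<and> continuous_on UNIV (DH x)
          \<and> convex_on UNIV (H x)"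
    and H_growth: "C\<^sub>H > 1"
       "AE x in lebesgue_on \<Omega>. \<forall>p. norm (DH x p) \<le> C\<^sub>H * norm p powr (\<alpha> - 1) + C\<^sub>H \<and> H x 0 \<le> C\<^sub>H"
    and H_coerc:
       "(AE x in lebesgue_on \<Omega>. \<forall>p. H x p \<ge> norm p powr \<alpha> / C\<^sub>H - C\<^sub>H)
      \<or> (AE x in lebesgue_on \<Omega>. \<forall>p. DH x p \<bullet> p \<ge> norm p powr \<alpha> / C\<^sub>H - C\<^sub>H \<and> H x p \<ge> - C\<^sub>H)
      \<or> (AE x in lebesgue_on \<Omega>. \<forall>p. - H x p + DH x p \<bullet> p \<ge> norm p powr \<alpha> / C\<^sub>H - C\<^sub>H
                                      \<and> H x p \<ge> - C\<^sub>H)"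
    and u: "W1p \<Omega> \<gamma> u Du"
    and tu: "in_Lp (restrict_space \<sigma> \<Gamma>D) \<gamma> tu"
  shows "\<forall>K. \<exists>R. \<forall>m h.
            in_Lp (lebesgue_on \<Omega>) (\<beta> + 1) m \<and> (\<forall>x\<in>\<Omega>. m x \<ge> 0) \<and>
            in_Lp (restrict_space \<sigma> \<Gamma>D) \<gamma>' h \<and> (\<forall>s\<in>\<Gamma>D. h s \<ge> 0) \<and>
            Lp_norm (lebesgue_on \<Omega>) (\<beta> + 1) m + Lp_norm (restrict_space \<sigma> \<Gamma>D) \<gamma>' h \<ge> R
          \<longrightarrow> (A_pair \<Omega> (restrict_space \<sigma> \<Gamma>D) \<gamma>' H g Du tu m h m h
                - A_pair \<Omega> (restrict_space \<sigma> \<Gamma>D) \<gamma>' H g Du tu (\<lambda>_. 0) (\<lambda>_. 0) m h)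
              / (Lp_norm (lebesgue_on \<Omega>) (\<beta> + 1) m + Lp_norm (restrict_space \<sigma> \<Gamma>D) \<gamma>' h)
              \<ge> K"
proof -
  let ?M = "lebesgue_on \<Omega>" and ?N = "restrict_space \<sigma> \<Gamma>D"
  have "(\<beta> + 1) / \<beta> > 1"
    using exps(2) by (simp add: field_simps)
  then have \<gamma>: "\<gamma> > 1"
    unfolding exps(3) using exps(1) by (rule less_1_mult)
  then have \<gamma>': "\<gamma>' > 1" "1 / \<gamma> + 1 / \<gamma>' = 1"
    unfolding exps(4) by (simp_all add: field_simps)
  have Du_meas: "Du \<in> borel_measurable ?M"
    using u unfolding W1p_def by blast
  have Hu_meas: "(\<lambda>x. H x (Du x)) \<in> borel_measurable ?M"
  proof (rule borel_measurable_Caratheodory[OF _ _ Du_meas])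
    show "(\<lambda>x. H x p) \<in> borel_measurable ?M" for p
      using H_meas[of p] closure_subset by (rule measurable_restrict_mono)
    show "AE x in ?M. continuous_on UNIV (H x)"
      using H_C1 by eventually_elim
        (auto intro!: continuous_at_imp_continuous_on dest: has_derivative_continuous)
  qed (use \<Omega>(1) in simp)
  have H_lower: "AE x in ?M. \<forall>p. - C\<^sub>H \<le> H x p"
    using H_coerc
  proof (elim disjE)
    assume "AE x in ?M. \<forall>p. H x p \<ge> norm p powr \<alpha> / C\<^sub>H - C\<^sub>H"
    then show ?thesis
      by eventually_elim (smt (verit) H_growth(1) divide_nonneg_pos powr_ge_zero)
  qed (auto elim!: eventually_mono)
  have Hu_bound: "AE x in ?M. \<bar>H x (Du x)\<bar> \<le> 2 * C\<^sub>H * (1 + norm (Du x) powr \<alpha>)"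
    using H_C1 H_growth(2) H_lower
    by eventually_elim (intro abs_le_of_convex_gradient_growth, use H_growth(1) exps(1) in auto)
  have "space ?N = \<Gamma>D"
    using sets_eq_imp_space_eq[OF \<sigma>(1)] by (simp add: space_restrict_space)
  then show ?thesis
    using A_pair_diff_superlinear[where H = H and Du = Du and C = "C\<^sub>g", OF _ exps(2,3) \<gamma> \<gamma>' g_cont _ _
        Hu_meas Hu_bound Du_meas W1p_integrable_norm_gradient_powr[OF u] tu]
      \<Omega>(1,2) g_growth \<gamma>
    by (simp add: bounded_set_imp_lmeasurable)
qed

end
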